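(* Let $n\ge2$ and $\mu\in{]0,\infty[}$. The polynomial $$f=-\tfrac{1}{16}\big(z_0^2\overline{z_1}^2-\overline{z_0}^2z_1^2\big)^2\big(|z_0|^2|z_1|^2-3|z_1|^4\big)+|z_1|^{12}$$ (pointwise products) lies in $\mathcal{R}_{0,\mu}$, i.e. it is real-valued, in $\bigoplus_k\mathscr{P}^{k,k}(\mathbb{C}^{1+n})$ and satisfies $f(w)\ge0$ for all $w\in\mathbb{C}^{1+n}$ with $\mathcal{J}(w)=\mu$, but $f$ cannot be written as $\sum_{j=1}^\ell\overline{g_j}g_j+(\mathcal{J}-\mu)h$ with $\ell\in\mathbb{N}_0$, $g_j\in\bigoplus_k\mathscr{P}^{k,k}(\mathbb{C}^{1+n})$ and real-valued $h\in\bigoplus_k\mathscr{P}^{k,k}(\mathbb{C}^{1+n})$.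
   Context: $z_0,\dots,z_n$ are the complex coordinates on $\mathbb{C}^{1+n}$ and $\overline{z_j}$ their conjugates; $\mathscr{P}^{k,k}(\mathbb{C}^{1+n})$ is the complex span of monomials $z^K\overline{z}^L$ with $|K|=|L|=k$ ($K,L\in\mathbb{N}_0^{1+n}$); $\bigoplus_k\mathscr{P}^{k,k}(\mathbb{C}^{1+n})$ is the algebra of $\mathrm{U}(1)$-invariant polynomials, with pointwise product. $\mathcal{J}=\sum_{j=0}^n z_j\overline{z_j}$. $\mathcal{R}_{0,\mu}$ denotes the set of real-valued elements of $\bigoplus_k\mathscr{P}^{k,k}(\mathbb{C}^{1+n})$ that are nonnegative on the level set $\{w:\mathcal{J}(w)=\mu\}$ (the quadratic module of the classical reduction to $\mathbb{CP}^n$). The second assertion says $f\notin(\bigoplus_k\mathscr{P}^{k,k})^{++}_{\mathrm H}+(\langle\mathcal{J}-\mu\rangle)_{\mathrm H}$, where the ideal is generated with respect to the pointwise product. *)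

theory Defs
  imports Complex_Main
begin

text \<open>Points of C^(1+n) are functions w :: nat => complex; only coordinates 0..n matter.\<close>

definition mono :: "nat \<Rightarrow> (nat \<Rightarrow> nat) \<Rightarrow> (nat \<Rightarrow> nat) \<Rightarrow> (nat \<Rightarrow> complex) \<Rightarrow> complex" where
  "mono n K L w = (\<Prod>j\<le>n. w j ^ K j * cnj (w j) ^ L j)"

definition UInv :: "nat \<Rightarrow> ((nat \<Rightarrow> complex) \<Rightarrow> complex) set" where
  "UInv n = {f. \<exists>S c. finite S \<and>
      (\<forall>p\<in>S. (\<Sum>j\<le>n. fst p j) = (\<Sum>j\<le>n. snd p j)) \<and>
      f = (\<lambda>w. \<Sum>p\<in>S. c p * mono n (fst p) (snd p) w)}"

definition J :: "nat \<Rightarrow> (nat \<Rightarrow> complex) \<Rightarrow> complex" where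
  "J n w = (\<Sum>j\<le>n. w j * cnj (w j))"

definition R0mu :: "nat \<Rightarrow> real \<Rightarrow> ((nat \<Rightarrow> complex) \<Rightarrow> complex) set" where
  "R0mu n \<mu> = {f. f \<in> UInv n \<and> (\<forall>w. f w \<in> \<real>) \<and>
      (\<forall>w. J n w = complex_of_real \<mu> \<longrightarrow> 0 \<le> Re (f w))}"

definition fex :: "(nat \<Rightarrow> complex) \<Rightarrow> complex" where
  "fex w = (let z0 = w 0; z1 = w 1;
              a0 = z0 * cnj z0; a1 = z1 * cnj z1
            in - (1/16) * (z0^2 * cnj z1 ^ 2 - cnj z0 ^ 2 * z1^2)^2 * (a0 * a1 - 3 * a1^2) + a1^6)"

end

(*
  With v = z0 * conj z1 = x + i y and T = |z1|^2, the polynomial f is the Motzkin form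
  M(x, y, T) = x^4 y^2 + x^2 y^4 + T^6 - 3 x^2 y^2 T^2, which is nonnegative by AM-GM.

  Suppose f = sum |g_j|^2 + (J - mu) h. The points t (a + i b, c, 1, 0, ..., 0) with
  t^2 = mu / N, N = 1 + a^2 + b^2 + c^2, lie on J = mu, and there N^D g_j becomes a complex
  polynomial in (a, b, c) once D is large. Its real and imaginary parts P_k satisfy
  sum P_k^2 = mu^6 N^(2D-6) c^6 M(a, b, c); the lowest homogeneous parts (of degree 6) get rid of
  the factor N^(2D-6), so c^6 M(a, b, c) would be a sum of squares of sextic forms. As in
  Motzkin's argument this is impossible: such forms vanish at (+-1, +-1, 1), have no terms of
  degree less than 3 in c, and are a constant multiple of c^6 on the planes a = 0 and b = 0.
  A mixed second difference in (a, b) at c = 1 then shows that they vanish at (0, 0, 1),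
  where c^6 M(a, b, c) = 1.
*)
theory Submission
  imports Defs "HOL-Computational_Algebra.Polynomial"
begin

section \<open>The Motzkin form\<close>

definition motzkin :: "real \<Rightarrow> real \<Rightarrow> real \<Rightarrow> real" where
  "motzkin x y z = x^4 * y^2 + x^2 * y^4 + z^6 - 3 * x^2 * y^2 * z^2"

lemma motzkin_scale: "motzkin (s*x) (s*y) (s*z) = s^6 * motzkin x y z"
  unfolding motzkin_def by algebra

lemma motzkin_nonneg: "0 \<le> motzkin x y z"
proof -
  define P Q R where "P = x^2" and "Q = y^2" and "R = z^2"
  have "0 \<le> P" "0 \<le> Q" "0 \<le> R" by (simp_all add: P_def Q_def R_def)
  have "0 \<le> P * Q * (P + Q - 3*R) + R^3"
  proof (cases "3*R \<le> P + Q")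
    case True
    then show ?thesis using \<open>0 \<le> P\<close> \<open>0 \<le> Q\<close> \<open>0 \<le> R\<close> by simp
  next
    case False
    have "P * Q \<le> (P + Q)^2 / 4"
      using sum_squares_ge_zero[of "P - Q" 0] by (simp add: power2_eq_square algebra_simps)
    then have "(P + Q)^2 / 4 * (P + Q - 3*R) \<le> P * Q * (P + Q - 3*R)"
      using False by (intro mult_right_mono_neg) auto
    moreover have "(P + Q)^2 / 4 * (P + Q - 3*R) + R^3 = (P + Q - 2*R)^2 * (P + Q + R) / 4"
      by (simp add: field_simps power2_eq_square power3_eq_cube)
    moreover have "0 \<le> (P + Q - 2*R)^2 * (P + Q + R) / 4"
      using \<open>0 \<le> P\<close> \<open>0 \<le> Q\<close> \<open>0 \<le> R\<close> by simp
    ultimately show ?thesis by linarith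
  qed
  also have "\<dots> = motzkin x y z"
    by (simp add: P_def Q_def R_def motzkin_def) algebra
  finally show ?thesis .
qed

lemma fex_conv_invariants: "fex = (\<lambda>w. - (1/16) * ((w 0 * cnj (w 1))^2 - (w 1 * cnj (w 0))^2)^2
      * ((w 0 * cnj (w 1)) * (w 1 * cnj (w 0)) - 3 * (w 1 * cnj (w 1))^2) + (w 1 * cnj (w 1))^6)"
  by (simp add: fun_eq_iff fex_def Let_def power_mult_distrib mult_ac)

lemma fex_eq_motzkin:
  "fex w = of_real (motzkin (Re (w 0 * cnj (w 1))) (Im (w 0 * cnj (w 1))) (cmod (w 1) ^ 2))"
proof -
  define x y where "x = Re (w 0 * cnj (w 1))" and "y = Im (w 0 * cnj (w 1))"
  define T where "T = cmod (w 1) ^ 2"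
  have "(w 0 * cnj (w 1))^2 - (w 1 * cnj (w 0))^2 = 4 * \<i> * of_real (x * y)"
    by (simp add: x_def y_def complex_eq_iff power2_eq_square algebra_simps)
  moreover have "(w 0 * cnj (w 1)) * (w 1 * cnj (w 0)) = of_real (x^2 + y^2)"
    by (simp add: x_def y_def complex_eq_iff power2_eq_square algebra_simps)
  moreover have "w 1 * cnj (w 1) = of_real T"
    by (simp add: T_def complex_norm_square del: of_real_power)
  ultimately have "fex w = of_real (x^2 * y^2 * (x^2 + y^2 - 3 * T^2) + T^6)"
    unfolding fex_conv_invariants by (simp only:) (simp add: power_mult_distrib algebra_simps)
  then show ?thesis
    by (simp add: x_def y_def T_def motzkin_def algebra_simps)
qed

section \<open>The algebra of invariant polynomials\<close>

lemma mono_mult: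
  "mono n K L w * mono n K' L' w = mono n (\<lambda>j. K j + K' j) (\<lambda>j. L j + L' j) w"
  by (simp add: mono_def prod.distrib[symmetric] power_add algebra_simps)

lemma UInv_sum_mono:
  assumes "finite I" and "\<forall>i\<in>I. (\<Sum>j\<le>n. K i j) = (\<Sum>j\<le>n. L i j)"
  shows "(\<lambda>w. \<Sum>i\<in>I. c i * mono n (K i) (L i) w) \<in> UInv n"
proof -
  let ?e = "\<lambda>i. (K i, L i)"
  define c' where "c' p = (\<Sum>i\<in>{i\<in>I. ?e i = p}. c i)" for p
  have "(\<Sum>i\<in>I. c i * mono n (K i) (L i) w) = (\<Sum>p\<in>?e ` I. c' p * mono n (fst p) (snd p) w)" for w
  proof -
    have "(\<Sum>i\<in>I. c i * mono n (K i) (L i) w)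
        = (\<Sum>p\<in>?e ` I. \<Sum>i\<in>{i\<in>I. ?e i = p}. c i * mono n (K i) (L i) w)"
      by (rule sum.image_gen[OF assms(1)])
    also have "\<dots> = (\<Sum>p\<in>?e ` I. c' p * mono n (fst p) (snd p) w)"
      unfolding c'_def sum_distrib_right by (intro sum.cong refl) auto
    finally show ?thesis .
  qed
  then show ?thesis
    unfolding UInv_def using assms by (intro CollectI exI[of _ "?e ` I"] exI[of _ c']) auto
qed

lemma UInv_add:
  assumes "f \<in> UInv n" and "g \<in> UInv n"
  shows "(\<lambda>w. f w + g w) \<in> UInv n"
proof -
  obtain S c where S: "finite S" "\<forall>p\<in>S. (\<Sum>j\<le>n. fst p j) = (\<Sum>j\<le>n. snd p j)"
    and f: "f = (\<lambda>w. \<Sum>p\<in>S. c p * mono n (fst p) (snd p) w)"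
    using assms(1) unfolding UInv_def by blast
  obtain T d where T: "finite T" "\<forall>p\<in>T. (\<Sum>j\<le>n. fst p j) = (\<Sum>j\<le>n. snd p j)"
    and g: "g = (\<lambda>w. \<Sum>p\<in>T. d p * mono n (fst p) (snd p) w)"
    using assms(2) unfolding UInv_def by blast
  have "(\<lambda>w. \<Sum>i\<in>S <+> T. case_sum c d i * mono n (fst (case_sum id id i)) (snd (case_sum id id i)) w)
      \<in> UInv n"
    using S T by (intro UInv_sum_mono) auto
  then show ?thesis
    using S(1) T(1) by (simp add: f g sum.Plus o_def)
qed

lemma UInv_mult:
  assumes "f \<in> UInv n" and "g \<in> UInv n"
  shows "(\<lambda>w. f w * g w) \<in> UInv n"
proof -
  obtain S c where S: "finite S" "\<forall>p\<in>S. (\<Sum>j\<le>n. fst p j) = (\<Sum>j\<le>n. snd p j)"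
    and f: "f = (\<lambda>w. \<Sum>p\<in>S. c p * mono n (fst p) (snd p) w)"
    using assms(1) unfolding UInv_def by blast
  obtain T d where T: "finite T" "\<forall>p\<in>T. (\<Sum>j\<le>n. fst p j) = (\<Sum>j\<le>n. snd p j)"
    and g: "g = (\<lambda>w. \<Sum>p\<in>T. d p * mono n (fst p) (snd p) w)"
    using assms(2) unfolding UInv_def by blast
  have "(\<lambda>w. \<Sum>x\<in>S \<times> T. (c (fst x) * d (snd x)) *
      mono n (\<lambda>j. fst (fst x) j + fst (snd x) j) (\<lambda>j. snd (fst x) j + snd (snd x) j) w) \<in> UInv n"
    by (rule UInv_sum_mono) (use S T in \<open>auto simp: sum.distrib\<close>)
  then show ?thesis
    by (simp add: f g sum_product sum.cartesian_product mono_mult[symmetric] split_def algebra_simps)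
qed

lemma UInv_const: "(\<lambda>w. c) \<in> UInv n"
  using UInv_sum_mono[where I = "{()}" and K = "\<lambda>_ _. 0" and L = "\<lambda>_ _. 0" and c = "\<lambda>_. c"]
  by (simp add: mono_def)

lemma UInv_diff: "f \<in> UInv n \<Longrightarrow> g \<in> UInv n \<Longrightarrow> (\<lambda>w. f w - g w) \<in> UInv n"
  using UInv_add[of f n "\<lambda>w. -1 * g w"] UInv_mult[OF UInv_const[of "-1"]] by simp

lemma UInv_power: "f \<in> UInv n \<Longrightarrow> (\<lambda>w. f w ^ k) \<in> UInv n"
  by (induction k) (simp_all add: UInv_const UInv_mult)

lemma UInv_coord_cnj:
  assumes "i \<le> n" and "j \<le> n"
  shows "(\<lambda>w. w i * cnj (w j)) \<in> UInv n"
proof -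
  define \<delta> where "\<delta> i = (\<lambda>k. if k = i then 1 else 0 :: nat)" for i :: nat
  have power_\<delta>: "z ^ \<delta> i k = (if k = i then z else 1)" for z :: complex and i k
    by (simp add: \<delta>_def)
  have "mono n (\<delta> i) (\<delta> j) w = w i * cnj (w j)" for w
    using assms by (simp add: mono_def power_\<delta> prod.distrib prod.delta)
  moreover have "(\<lambda>w. \<Sum>_\<in>{()}. 1 * mono n (\<delta> i) (\<delta> j) w) \<in> UInv n"
    by (rule UInv_sum_mono) (use assms in \<open>simp_all add: \<delta>_def\<close>)
  ultimately show ?thesis by simp
qed

lemma fex_UInv:
  assumes "1 \<le> n"
  shows "fex \<in> UInv n"
  unfolding fex_conv_invariants
  using assms by (intro UInv_add UInv_mult UInv_diff UInv_power UInv_const UInv_coord_cnj) auto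

section \<open>Sums of squares of univariate polynomials\<close>

lemma poly_sum_list_squares: "poly (\<Sum>p\<leftarrow>ps. p^2) x = (\<Sum>p\<leftarrow>ps. poly p x ^ 2)"
  by (induction ps) auto

lemma sum_list_squares_eq_0_iff:
  "(\<Sum>x\<leftarrow>xs. f x ^ 2) = (0::'a::linordered_idom) \<longleftrightarrow> (\<forall>x\<in>set xs. f x = 0)"
proof (induction xs)
  case (Cons a xs)
  have "0 \<le> (\<Sum>x\<leftarrow>xs. f x ^ 2)" by (rule sum_list_nonneg) auto
  then show ?case using Cons.IH by (simp add: add_nonneg_eq_0_iff)
qed simp

lemma coeffs_of_sum_squares_eq_monom_mult:
  fixes ps :: "real poly list"
  assumes "(\<Sum>p\<leftarrow>ps. p^2) = monom 1 (2*k) * q"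
  shows "\<forall>p\<in>set ps. \<forall>j<k. coeff p j = 0" and "(\<Sum>p\<leftarrow>ps. coeff p k ^ 2) = poly q 0"
proof -
  have "(\<forall>p\<in>set ps. \<forall>j<k. coeff p j = 0) \<and> (\<Sum>p\<leftarrow>ps. coeff p k ^ 2) = poly q 0"
    using assms
  proof (induction k arbitrary: ps)
    case 0
    then have "poly (\<Sum>p\<leftarrow>ps. p^2) 0 = poly q 0" by simp
    then show ?case unfolding poly_sum_list_squares by (simp add: poly_0_coeff_0)
  next
    case (Suc k)
    have "poly (\<Sum>p\<leftarrow>ps. p^2) 0 = 0" using Suc.prems by (simp add: poly_monom)
    then have "(\<Sum>p\<leftarrow>ps. coeff p 0 ^ 2) = 0" unfolding poly_sum_list_squares by (simp add: poly_0_coeff_0)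
    then have coeff0: "coeff p 0 = 0" if "p \<in> set ps" for p
      using that by (simp add: sum_list_squares_eq_0_iff)
    define shift where "shift p = synthetic_div p 0" for p :: "real poly"
    have shift: "p = pCons 0 (shift p)" if "p \<in> set ps" for p
      using synthetic_div_correct[of p 0] coeff0[OF that] by (simp add: shift_def poly_0_coeff_0)
    have square_shift: "p^2 = monom 1 2 * shift p ^ 2" if "p \<in> set ps" for p
      by (subst shift[OF that]) (simp add: monom_Suc numeral_2_eq_2 power2_eq_square)
    have "monom 1 2 * (\<Sum>p\<leftarrow>ps. shift p ^ 2) = monom 1 2 * (monom 1 (2*k) * q)"
      using Suc.prems
      by (simp add: square_shift sum_list_const_mult mult_monom cong: map_cong)
    then have "(\<Sum>p\<leftarrow>map shift ps. p ^ 2) = monom 1 (2*k) * q" by (simp add: o_def)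
    note IH = Suc.IH[OF this]
    have coeff_Suc: "coeff p (Suc j) = coeff (shift p) j" if "p \<in> set ps" for p j
      using shift[OF that] by (metis coeff_pCons_Suc)
    have "\<forall>p\<in>set ps. \<forall>j<Suc k. coeff p j = 0"
      using IH coeff0 coeff_Suc by (auto simp: less_Suc_eq_0_disj)
    moreover have "(\<Sum>p\<leftarrow>ps. coeff p (Suc k) ^ 2) = poly q 0"
      using IH coeff_Suc by (simp add: o_def cong: map_cong)
    ultimately show ?case by blast
  qed
  then show "\<forall>p\<in>set ps. \<forall>j<k. coeff p j = 0" and "(\<Sum>p\<leftarrow>ps. coeff p k ^ 2) = poly q 0"
    by blast+
qed

lemma coeffs_of_sum_squares_poly_eq_power_mult:
  fixes ps :: "real poly list"
  assumes "\<And>s. (\<Sum>p\<leftarrow>ps. poly p s ^ 2) = s^(2*k) * poly q s"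
  shows "\<forall>p\<in>set ps. \<forall>j<k. coeff p j = 0" and "(\<Sum>p\<leftarrow>ps. coeff p k ^ 2) = poly q 0"
proof -
  have "(\<Sum>p\<leftarrow>ps. p^2) = monom 1 (2*k) * q"
    by (rule poly_eq_poly_eq_iff[THEN iffD1]) (simp add: fun_eq_iff poly_sum_list_squares assms poly_monom)
  then show "\<forall>p\<in>set ps. \<forall>j<k. coeff p j = 0" and "(\<Sum>p\<leftarrow>ps. coeff p k ^ 2) = poly q 0"
    by (rule coeffs_of_sum_squares_eq_monom_mult)+
qed

section \<open>Polynomials in three real variables\<close>

type_synonym exps3 = "nat \<times> nat \<times> nat"

fun monom3 :: "exps3 \<Rightarrow> real \<times> real \<times> real \<Rightarrow> real" where
  "monom3 (i, j, k) (a, b, c) = a^i * b^j * c^k"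

fun degree3 :: "exps3 \<Rightarrow> nat" where
  "degree3 (i, j, k) = i + j + k"

text \<open>A polynomial in three real variables is a list of terms \<open>(coefficient, exponents)\<close>,
  in which exponents may repeat.\<close>

definition eval3 :: "('a::real_algebra_1 \<times> exps3) list \<Rightarrow> real \<times> real \<times> real \<Rightarrow> 'a" where
  "eval3 ts u = (\<Sum>(r, \<alpha>)\<leftarrow>ts. r * of_real (monom3 \<alpha> u))"

definition homogeneous3 :: "nat \<Rightarrow> ('a \<times> exps3) list \<Rightarrow> bool" where
  "homogeneous3 d ts \<longleftrightarrow> (\<forall>(r, \<alpha>)\<in>set ts. degree3 \<alpha> = d)"

definition hom_part :: "nat \<Rightarrow> ('a \<times> exps3) list \<Rightarrow> ('a \<times> exps3) list" where
  "hom_part d ts = filter (\<lambda>(r, \<alpha>). degree3 \<alpha> = d) ts"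

lemma eval3_Nil [simp]: "eval3 [] u = 0"
  by (simp add: eval3_def)

lemma eval3_Cons [simp]: "eval3 ((r, \<alpha>) # ts) u = r * of_real (monom3 \<alpha> u) + eval3 ts u"
  by (simp add: eval3_def)

lemma eval3_append [simp]: "eval3 (ts @ ts') u = eval3 ts u + eval3 ts' u"
  by (simp add: eval3_def)

lemma homogeneous3_hom_part: "homogeneous3 d (hom_part d ts)"
  by (auto simp: homogeneous3_def hom_part_def)

lemma eval3_map_cnj: "eval3 (map (apfst cnj) ts) u = cnj (eval3 ts u)"
  by (induction ts) auto

lemma eval3_map_Re: "eval3 (map (apfst Re) ts) u = Re (eval3 ts u)"
  by (induction ts) auto

lemma eval3_map_Im: "eval3 (map (apfst Im) ts) u = Im (eval3 ts u)"
  by (induction ts) auto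

fun add3 :: "exps3 \<Rightarrow> exps3 \<Rightarrow> exps3" where
  "add3 (i, j, k) (i', j', k') = (i + i', j + j', k + k')"

lemma monom3_add3: "monom3 (add3 \<alpha> \<beta>) u = monom3 \<alpha> u * monom3 \<beta> u"
  by (cases \<alpha>; cases \<beta>; cases u) (simp add: power_add)

lemma eval3_product:
  fixes ts ts' :: "(complex \<times> exps3) list"
  shows "eval3 [(r * r', add3 \<alpha> \<beta>). (r, \<alpha>) \<leftarrow> ts, (r', \<beta>) \<leftarrow> ts'] u = eval3 ts u * eval3 ts' u"
proof (induction ts)
  case (Cons t ts)
  have "eval3 [(r * r', add3 \<alpha> \<beta>). (r', \<beta>) \<leftarrow> ts'] u = r * of_real (monom3 \<alpha> u) * eval3 ts' u"
    for r :: complex and \<alpha>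
    by (induction ts') (auto simp: monom3_add3 algebra_simps)
  with Cons show ?case by (cases t) (simp add: eval3_def algebra_simps)
qed (simp add: eval3_def)

definition polyfun3 :: "(real \<times> real \<times> real \<Rightarrow> complex) \<Rightarrow> bool" where
  "polyfun3 F \<longleftrightarrow> (\<exists>ts. \<forall>u. F u = eval3 ts u)"

lemma polyfun3_cong: "polyfun3 F \<Longrightarrow> (\<And>u. G u = F u) \<Longrightarrow> polyfun3 G"
  unfolding polyfun3_def by metis

lemma polyfun3_monom3: "polyfun3 (\<lambda>u. of_real (monom3 \<alpha> u))"
  unfolding polyfun3_def by (intro exI[of _ "[(1, \<alpha>)]"]) simp

lemma polyfun3_const: "polyfun3 (\<lambda>u. z)"
  unfolding polyfun3_def by (intro exI[of _ "[(z, (0, 0, 0))]"]) (simp add: split_def)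

lemma polyfun3_add: "polyfun3 F \<Longrightarrow> polyfun3 G \<Longrightarrow> polyfun3 (\<lambda>u. F u + G u)"
  unfolding polyfun3_def by (metis eval3_append)

lemma polyfun3_mult: "polyfun3 F \<Longrightarrow> polyfun3 G \<Longrightarrow> polyfun3 (\<lambda>u. F u * G u)"
  unfolding polyfun3_def by (metis eval3_product)

lemma polyfun3_power: "polyfun3 F \<Longrightarrow> polyfun3 (\<lambda>u. F u ^ k)"
  by (induction k) (simp_all add: polyfun3_const polyfun3_mult)

lemma polyfun3_sum: "(\<And>x. x \<in> A \<Longrightarrow> polyfun3 (F x)) \<Longrightarrow> polyfun3 (\<lambda>u. \<Sum>x\<in>A. F x u)"
  by (induction A rule: infinite_finite_induct) (simp_all add: polyfun3_const polyfun3_add)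

lemma polyfun3_prod: "(\<And>x. x \<in> A \<Longrightarrow> polyfun3 (F x)) \<Longrightarrow> polyfun3 (\<lambda>u. \<Prod>x\<in>A. F x u)"
  by (induction A rule: infinite_finite_induct) (simp_all add: polyfun3_const polyfun3_mult)

lemma polyfun3_cnj: "polyfun3 F \<Longrightarrow> polyfun3 (\<lambda>u. cnj (F u))"
  unfolding polyfun3_def by (metis eval3_map_cnj)

lemma monom3_scale: "monom3 \<alpha> (s*a, s*b, s*c) = s ^ degree3 \<alpha> * monom3 \<alpha> (a, b, c)"
  by (cases \<alpha>) (simp add: power_mult_distrib power_add)

definition weight :: "real \<times> real \<times> real \<Rightarrow> real" where
  "weight u = 1 + (fst u)^2 + (fst (snd u))^2 + (snd (snd u))^2"

lemma weight_pos: "0 < weight u"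
  by (simp add: weight_def add_pos_nonneg)

definition radial_poly :: "(real \<times> exps3) list \<Rightarrow> real \<times> real \<times> real \<Rightarrow> real poly" where
  "radial_poly ts u = (\<Sum>(r, \<alpha>)\<leftarrow>ts. monom (r * monom3 \<alpha> u) (degree3 \<alpha>))"

lemma poly_radial_poly: "poly (radial_poly ts (a, b, c)) s = eval3 ts (s*a, s*b, s*c)"
  by (induction ts) (auto simp: radial_poly_def poly_monom monom3_scale)

lemma coeff_radial_poly: "coeff (radial_poly ts u) d = eval3 (hom_part d ts) u"
  by (induction ts) (auto simp: radial_poly_def hom_part_def coeff_monom)

lemma sum_squares_hom_part_eq:
  fixes tss :: "(real \<times> exps3) list list"
  assumes hom: "\<And>s a b c. F (s*a, s*b, s*c) = s^(2*d) * F (a, b, c)"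
    and sos: "\<And>u. (\<Sum>ts\<leftarrow>tss. eval3 ts u ^ 2) = weight u ^ m * F u"
  shows "(\<Sum>ts\<leftarrow>tss. eval3 (hom_part d ts) u ^ 2) = F u"
proof -
  obtain a b c where u: "u = (a, b, c)" by (cases u)
  define Q where "Q = smult (F u) ([:1, 0, a^2 + b^2 + c^2:] ^ m)"
  have "(\<Sum>p\<leftarrow>map (\<lambda>ts. radial_poly ts u) tss. poly p s ^ 2) = s^(2*d) * poly Q s" for s
  proof -
    have "weight (s*a, s*b, s*c) = poly [:1, 0, a^2 + b^2 + c^2:] s"
      by (simp add: weight_def algebra_simps power2_eq_square)
    then show ?thesis
      using sos[of "(s*a, s*b, s*c)"] hom[of s a b c]
      by (simp add: o_def poly_radial_poly u Q_def poly_power)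
  qed
  from coeffs_of_sum_squares_poly_eq_power_mult(2)[OF this]
  show ?thesis by (simp add: o_def coeff_radial_poly Q_def)
qed

section \<open>Motzkin's argument\<close>

definition poly_in_c :: "(real \<times> exps3) list \<Rightarrow> real \<Rightarrow> real \<Rightarrow> real poly" where
  "poly_in_c ts a b = (\<Sum>(r, (i, j, l))\<leftarrow>ts. monom (r * a^i * b^j) l)"

lemma poly_poly_in_c: "poly (poly_in_c ts a b) c = eval3 ts (a, b, c)"
  by (induction ts) (auto simp: poly_in_c_def poly_monom)

lemma coeff_poly_in_c:
  "coeff (poly_in_c ts a b) k = (\<Sum>(r, (i, j, l))\<leftarrow>ts. if l = k then r * a^i * b^j else 0)"
  by (induction ts) (auto simp: poly_in_c_def coeff_monom)

lemma eval3_c_1_eq_sum_coeffs: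
  assumes "homogeneous3 d ts"
  shows "eval3 ts (a, b, 1) = (\<Sum>k\<le>d. coeff (poly_in_c ts a b) k)"
  using assms
proof (induction ts)
  case (Cons t ts)
  obtain r i j l where t: "t = (r, (i, j, l))" by (cases t) auto
  with Cons.prems have "l \<le> d" and "homogeneous3 d ts" by (auto simp: homogeneous3_def)
  then show ?case
    using Cons.IH by (simp add: t coeff_poly_in_c sum.distrib sum.delta)
qed (simp add: poly_in_c_def)

lemma coeff_poly_in_c_top_const:
  assumes "homogeneous3 d ts"
  shows "coeff (poly_in_c ts a b) d = coeff (poly_in_c ts 0 0) d"
  using assms by (induction ts) (auto simp: homogeneous3_def coeff_poly_in_c)

text \<open>Summed over the four quadrants, the mixed second difference at the origin annihilates every
  monomial \<open>a^i * b^j\<close> with \<open>i \<le> 1\<close> or \<open>j \<le> 1\<close>, in particular every one of degree at most 3.\<close>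

definition mixed_diff :: "(real \<Rightarrow> real \<Rightarrow> real) \<Rightarrow> real" where
  "mixed_diff F = (\<Sum>a\<in>{-1,1}. \<Sum>b\<in>{-1,1}. F a b - F a 0 - F 0 b + F 0 0)"

lemma mixed_diff_sum: "mixed_diff (\<lambda>a b. \<Sum>k\<in>A. F k a b) = (\<Sum>k\<in>A. mixed_diff (F k))"
  by (simp add: mixed_diff_def sum.distrib sum_subtractf sum_distrib_left)

lemma mixed_diff_add: "mixed_diff (\<lambda>a b. F a b + G a b) = mixed_diff F + mixed_diff G"
  by (simp add: mixed_diff_def algebra_simps)

lemma mixed_diff_monom:
  assumes "i + j \<le> 3"
  shows "mixed_diff (\<lambda>a b. r * a^i * b^j) = 0"
proof -
  have "i = 0 \<or> i = 1 \<or> j = 0 \<or> j = 1" using assms by arith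
  then show ?thesis by (auto simp: mixed_diff_def)
qed

lemma mixed_diff_coeff_poly_in_c:
  assumes "homogeneous3 d ts" and "d \<le> k + 3"
  shows "mixed_diff (\<lambda>a b. coeff (poly_in_c ts a b) k) = 0"
  using assms(1)
proof (induction ts)
  case (Cons t ts)
  obtain r i j l where t: "t = (r, (i, j, l))" by (cases t) auto
  with Cons.prems have "i + j + l = d" and "homogeneous3 d ts" by (auto simp: homogeneous3_def)
  then have "mixed_diff (\<lambda>a b. if l = k then r * a^i * b^j else 0) = 0"
    using assms(2) mixed_diff_monom[of i j r] by (auto simp: mixed_diff_def)
  then show ?case
    using Cons.IH \<open>homogeneous3 d ts\<close> by (simp add: t coeff_poly_in_c mixed_diff_add)
qed (simp add: poly_in_c_def mixed_diff_def)

lemma sextic_vanishes_at_0_0_1: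
  assumes hom: "homogeneous3 6 ts"
    and low: "\<And>a b k. k < 3 \<Longrightarrow> coeff (poly_in_c ts a b) k = 0"
    and axes: "\<And>a b k. a = 0 \<or> b = 0 \<Longrightarrow> k < 6 \<Longrightarrow> coeff (poly_in_c ts a b) k = 0"
    and corners: "\<And>a b. a \<in> {-1, 1} \<Longrightarrow> b \<in> {-1, 1} \<Longrightarrow> eval3 ts (a, b, 1) = 0"
  shows "eval3 ts (0, 0, 1) = 0"
proof -
  define \<kappa> where "\<kappa> = coeff (poly_in_c ts 0 0) 6"
  have on_axes: "eval3 ts (a, b, 1) = \<kappa>" if "a = 0 \<or> b = 0" for a b
  proof -
    have "eval3 ts (a, b, 1) = (\<Sum>k\<in>insert 6 {..<6}. coeff (poly_in_c ts a b) k)"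
      using eval3_c_1_eq_sum_coeffs[OF hom] by (simp add: atMost_Suc lessThan_Suc numeral_eq_Suc)
    also have "\<dots> = coeff (poly_in_c ts a b) 6"
      using axes[OF that] by simp
    finally show ?thesis using coeff_poly_in_c_top_const[OF hom] by (simp add: \<kappa>_def)
  qed
  have "mixed_diff (\<lambda>a b. eval3 ts (a, b, 1)) = (\<Sum>k\<le>6. mixed_diff (\<lambda>a b. coeff (poly_in_c ts a b) k))"
    by (simp add: eval3_c_1_eq_sum_coeffs[OF hom] mixed_diff_sum)
  also have "\<dots> = 0"
  proof (rule sum.neutral, intro ballI)
    fix k :: nat
    show "mixed_diff (\<lambda>a b. coeff (poly_in_c ts a b) k) = 0"
    proof (cases "k < 3")
      case True
      then show ?thesis using low by (simp add: mixed_diff_def)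
    next
      case False
      then show ?thesis by (intro mixed_diff_coeff_poly_in_c[OF hom]) simp
    qed
  qed
  finally have "mixed_diff (\<lambda>a b. eval3 ts (a, b, 1)) = 0" .
  moreover have "mixed_diff (\<lambda>a b. eval3 ts (a, b, 1)) = - 4 * \<kappa>"
    by (simp add: mixed_diff_def on_axes corners)
  ultimately show ?thesis using on_axes[of 0 0] by simp
qed

lemma c_pow6_motzkin_not_sum_squares:
  fixes tss :: "(real \<times> exps3) list list" and K :: real
  assumes "0 < K" and hom: "\<forall>ts\<in>set tss. homogeneous3 6 ts"
  shows "\<not> (\<forall>a b c. (\<Sum>ts\<leftarrow>tss. eval3 ts (a, b, c) ^ 2) = K * c^6 * motzkin a b c)"
proof
  assume sos: "\<forall>a b c. (\<Sum>ts\<leftarrow>tss. eval3 ts (a, b, c) ^ 2) = K * c^6 * motzkin a b c"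
  have sos_c: "(\<Sum>p\<leftarrow>map (\<lambda>ts. poly_in_c ts a b) tss. poly p c ^ 2) = K * c^6 * motzkin a b c"
    for a b c
    using sos by (simp add: o_def poly_poly_in_c)
  have low: "\<forall>ts\<in>set tss. \<forall>k<3. coeff (poly_in_c ts a b) k = 0" for a b
  proof -
    let ?q = "smult K ([:a^4 * b^2 + a^2 * b^4, 0, -3 * a^2 * b^2:] + monom 1 6)"
    have "(\<Sum>p\<leftarrow>map (\<lambda>ts. poly_in_c ts a b) tss. poly p c ^ 2) = c^(2*3) * poly ?q c" for c
      unfolding sos_c by (simp add: motzkin_def poly_monom) algebra
    from coeffs_of_sum_squares_poly_eq_power_mult(1)[OF this] show ?thesis by simp
  qed
  have axes: "\<forall>ts\<in>set tss. \<forall>k<6. coeff (poly_in_c ts a b) k = 0" if "a = 0 \<or> b = 0" for a b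
  proof -
    have "(\<Sum>p\<leftarrow>map (\<lambda>ts. poly_in_c ts a b) tss. poly p c ^ 2) = c^(2*6) * poly [:K:] c" for c
      unfolding sos_c using that by (auto simp: motzkin_def)
    from coeffs_of_sum_squares_poly_eq_power_mult(1)[OF this] show ?thesis by simp
  qed
  have corners: "eval3 ts (a, b, 1) = 0" if "ts \<in> set tss" "a \<in> {-1, 1}" "b \<in> {-1, 1}" for ts a b
  proof -
    have "(\<Sum>ts\<leftarrow>tss. eval3 ts (a, b, 1) ^ 2) = 0"
      using sos that(2,3) by (auto simp: motzkin_def)
    then show ?thesis using that(1) by (simp add: sum_list_squares_eq_0_iff)
  qed
  have "eval3 ts (0, 0, 1) = 0" if "ts \<in> set tss" for ts
    using hom low axes corners that by (intro sextic_vanishes_at_0_0_1) auto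
  then have "(\<Sum>ts\<leftarrow>tss. eval3 ts (0, 0, 1) ^ 2) = 0"
    by (simp add: sum_list_squares_eq_0_iff)
  moreover have "(\<Sum>ts\<leftarrow>tss. eval3 ts (0, 0, 1) ^ 2) = K"
    using sos by (simp add: motzkin_def)
  ultimately show False using \<open>0 < K\<close> by simp
qed

section \<open>Restriction to the level set of J\<close>

text \<open>\<open>sphere_point \<mu> (a, b, c)\<close> is the representative on \<open>J = \<mu>\<close> of the point
  \<open>(a + i b : c : 1 : 0 : \<dots>)\<close> of the affine chart \<open>z\<^sub>2 \<noteq> 0\<close> of projective space.\<close>

definition chart :: "real \<times> real \<times> real \<Rightarrow> nat \<Rightarrow> complex" where
  "chart u j = (if j = 0 then Complex (fst u) (fst (snd u)) else if j = 1 then of_real (snd (snd u))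
     else if j = 2 then 1 else 0)"

definition sphere_point :: "real \<Rightarrow> real \<times> real \<times> real \<Rightarrow> nat \<Rightarrow> complex" where
  "sphere_point \<mu> u j = of_real (sqrt (\<mu> / weight u)) * chart u j"

lemma polyfun3_weight: "polyfun3 (\<lambda>u. of_real (weight u))"
proof (rule polyfun3_cong)
  show "polyfun3 (\<lambda>u. 1 + of_real (monom3 (2, 0, 0) u) + of_real (monom3 (0, 2, 0) u)
      + of_real (monom3 (0, 0, 2) u))"
    by (intro polyfun3_add polyfun3_const polyfun3_monom3)
qed (auto simp: weight_def)

lemma polyfun3_chart: "polyfun3 (\<lambda>u. chart u j)"
proof -
  consider "j = 0" | "j = 1" | "j \<noteq> 0 \<and> j \<noteq> 1" by blast
  then show ?thesis
  proof cases
    case 1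
    have "polyfun3 (\<lambda>u. of_real (monom3 (1, 0, 0) u) + \<i> * of_real (monom3 (0, 1, 0) u))"
      by (intro polyfun3_add polyfun3_mult polyfun3_const polyfun3_monom3)
    then show ?thesis by (rule polyfun3_cong) (auto simp: chart_def 1 Complex_eq)
  next
    case 2
    show ?thesis using polyfun3_monom3[of "(0, 0, 1)"] by (rule polyfun3_cong) (auto simp: chart_def 2)
  next
    case 3
    show ?thesis
      using polyfun3_const[of "if j = 2 then 1 else 0"] by (rule polyfun3_cong) (use 3 in \<open>simp add: chart_def\<close>)
  qed
qed

lemma polyfun3_mono_chart: "polyfun3 (\<lambda>u. mono n K L (chart u))"
  unfolding mono_def
  by (intro polyfun3_prod polyfun3_mult polyfun3_power polyfun3_cnj polyfun3_chart)

lemma mono_scale: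
  "mono n K L (\<lambda>j. of_real t * x j) = of_real t ^ (\<Sum>j\<le>n. K j + L j) * mono n K L x"
  by (simp add: mono_def power_mult_distrib power_add power_sum prod.distrib algebra_simps)

lemma sphere_point_mono:
  assumes "0 \<le> \<mu>" and "(\<Sum>j\<le>n. K j) = k" and "(\<Sum>j\<le>n. L j) = k" and "k \<le> D"
  shows "of_real (weight u) ^ D * mono n K L (sphere_point \<mu> u)
    = of_real \<mu> ^ k * of_real (weight u) ^ (D - k) * mono n K L (chart u)"
proof -
  have "sqrt (\<mu> / weight u) ^ (2 * k) = (\<mu> / weight u) ^ k"
    using assms(1) weight_pos[of u] by (simp add: power_mult)
  moreover have "weight u ^ D = weight u ^ (D - k) * weight u ^ k"
    using assms(4) by (simp flip: power_add)
  ultimately have "weight u ^ D * sqrt (\<mu> / weight u) ^ (2 * k) = \<mu> ^ k * weight u ^ (D - k)"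
    using weight_pos[of u] by (simp add: power_divide)
  then have "of_real (weight u) ^ D * of_real (sqrt (\<mu> / weight u)) ^ (2 * k)
      = (of_real \<mu> ^ k * of_real (weight u) ^ (D - k) :: complex)"
    by (metis of_real_mult of_real_power)
  then show ?thesis
    using assms(2,3)
    by (simp add: sphere_point_def[abs_def] mono_scale sum.distrib mult_2 mult.assoc[symmetric])
qed

lemma eventually_polyfun3_UInv_sphere:
  assumes "g \<in> UInv n" and "0 \<le> \<mu>"
  shows "eventually (\<lambda>D. polyfun3 (\<lambda>u. of_real (weight u) ^ D * g (sphere_point \<mu> u))) sequentially"
proof -
  obtain S c where S: "finite S" "\<forall>p\<in>S. (\<Sum>j\<le>n. fst p j) = (\<Sum>j\<le>n. snd p j)"
    and g: "g = (\<lambda>w. \<Sum>p\<in>S. c p * mono n (fst p) (snd p) w)"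
    using assms(1) unfolding UInv_def by blast
  define deg where "deg p = (\<Sum>j\<le>n. fst p j)" for p :: "(nat \<Rightarrow> nat) \<times> (nat \<Rightarrow> nat)"
  have "eventually (\<lambda>D. \<forall>p\<in>S. deg p \<le> D) sequentially"
    using S(1) by (intro eventually_ball_finite ballI eventually_ge_at_top)
  then show ?thesis
  proof (rule eventually_mono)
    fix D assume D: "\<forall>p\<in>S. deg p \<le> D"
    have "polyfun3 (\<lambda>u. \<Sum>p\<in>S. c p * (of_real \<mu> ^ deg p * of_real (weight u) ^ (D - deg p)
        * mono n (fst p) (snd p) (chart u)))"
      by (intro polyfun3_sum polyfun3_mult polyfun3_const polyfun3_power polyfun3_weight
          polyfun3_mono_chart)
    then show "polyfun3 (\<lambda>u. of_real (weight u) ^ D * g (sphere_point \<mu> u))"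
    proof (rule polyfun3_cong)
      fix u
      have "of_real (weight u) ^ D * mono n (fst p) (snd p) (sphere_point \<mu> u)
          = of_real \<mu> ^ deg p * of_real (weight u) ^ (D - deg p) * mono n (fst p) (snd p) (chart u)"
        if "p \<in> S" for p
        using that S(2) D assms(2) by (intro sphere_point_mono) (auto simp: deg_def)
      then show "of_real (weight u) ^ D * g (sphere_point \<mu> u) = (\<Sum>p\<in>S. c p *
          (of_real \<mu> ^ deg p * of_real (weight u) ^ (D - deg p) * mono n (fst p) (snd p) (chart u)))"
        by (simp add: g sum_distrib_left algebra_simps cong: sum.cong)
    qed
  qed
qed

lemma J_chart:
  assumes "2 \<le> n"
  shows "J n (chart u) = of_real (weight u)"
proof -
  have "J n (chart u) = (\<Sum>j\<le>2. chart u j * cnj (chart u j))"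
    unfolding J_def using assms by (intro sum.mono_neutral_right) (auto simp: chart_def)
  also have "\<dots> = of_real (weight u)"
    by (simp add: numeral_2_eq_2 chart_def weight_def Complex_eq complex_eq_iff power2_eq_square)
  finally show ?thesis .
qed

lemma J_sphere_point:
  assumes "2 \<le> n" and "0 \<le> \<mu>"
  shows "J n (sphere_point \<mu> u) = of_real \<mu>"
proof -
  have "J n (sphere_point \<mu> u) = of_real (\<mu> / weight u) * J n (chart u)"
    using assms(2) weight_pos[of u]
    by (simp add: J_def sphere_point_def sum_distrib_left algebra_simps flip: of_real_mult)
  then show ?thesis
    using J_chart[OF assms(1)] weight_pos[of u] by simp
qed

lemma fex_sphere_point:
  assumes "0 \<le> \<mu>"
  shows "fex (sphere_point \<mu> (a, b, c)) = of_real ((\<mu> / weight (a, b, c)) ^ 6 * c^6 * motzkin a b c)"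
proof -
  define s where "s = \<mu> / weight (a, b, c)"
  have "0 \<le> s" using assms weight_pos[of "(a, b, c)"] by (simp add: s_def)
  have "sphere_point \<mu> (a, b, c) 0 * cnj (sphere_point \<mu> (a, b, c) 1) = Complex (s * c * a) (s * c * b)"
    using \<open>0 \<le> s\<close>
    by (simp add: sphere_point_def chart_def s_def[symmetric] complex_eq_iff power2_eq_square)
  moreover have "cmod (sphere_point \<mu> (a, b, c) 1) ^ 2 = s * c * c"
    using \<open>0 \<le> s\<close>
    by (simp add: sphere_point_def chart_def s_def[symmetric] norm_mult power_mult_distrib power2_eq_square[of c])
  ultimately show ?thesis
    using motzkin_scale[of "s * c" a b c] by (simp add: fex_eq_motzkin s_def[symmetric] power_mult_distrib)
qed

lemma sum_cnj_mult_self: "(\<Sum>g\<leftarrow>gs. cnj (g w) * g w) = of_real (\<Sum>g\<leftarrow>gs. cmod (g w) ^ 2)"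
  by (induction gs) (simp_all add: complex_norm_square mult.commute del: of_real_power)

lemma sum_squares_UInv_sphere_point:
  assumes "0 \<le> \<mu>" and "set gs \<subseteq> UInv n"
  obtains D :: nat and tss :: "(real \<times> exps3) list list"
  where "D\<^sub>0 \<le> D"
    and "\<And>u. (\<Sum>ts\<leftarrow>tss. eval3 ts u ^ 2)
      = weight u ^ (2*D) * (\<Sum>g\<leftarrow>gs. cmod (g (sphere_point \<mu> u)) ^ 2)"
proof -
  have "eventually (\<lambda>D. D\<^sub>0 \<le> D \<and> (\<forall>g\<in>set gs.
      polyfun3 (\<lambda>u. of_real (weight u) ^ D * g (sphere_point \<mu> u)))) sequentially"
    using assms by (intro eventually_conj eventually_ge_at_top eventually_ball_finite ballI
        eventually_polyfun3_UInv_sphere) auto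
  then obtain D where "D\<^sub>0 \<le> D"
    and "\<forall>g\<in>set gs. \<exists>ts. \<forall>u. of_real (weight u) ^ D * g (sphere_point \<mu> u) = eval3 ts u"
    unfolding polyfun3_def by (auto simp: eventually_sequentially)
  then obtain ts
    where ts: "\<And>g u. g \<in> set gs \<Longrightarrow> of_real (weight u) ^ D * g (sphere_point \<mu> u) = eval3 (ts g) u"
    by metis
  define tss where "tss = map (\<lambda>g. map (apfst Re) (ts g)) gs @ map (\<lambda>g. map (apfst Im) (ts g)) gs"
  have "(\<Sum>t\<leftarrow>tss. eval3 t u ^ 2) = weight u ^ (2*D) * (\<Sum>g\<leftarrow>gs. cmod (g (sphere_point \<mu> u)) ^ 2)"
    for u
  proof -
    have "(\<Sum>t\<leftarrow>tss. eval3 t u ^ 2) = (\<Sum>g\<leftarrow>gs. cmod (eval3 (ts g) u) ^ 2)"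
      by (simp add: tss_def o_def eval3_map_Re eval3_map_Im cmod_power2 sum_list_addf)
    also have "\<dots> = (\<Sum>g\<leftarrow>gs. weight u ^ (2*D) * cmod (g (sphere_point \<mu> u)) ^ 2)"
      using weight_pos[of u]
      by (intro arg_cong[of _ _ sum_list] map_cong refl)
        (simp add: ts[symmetric] norm_mult norm_power power_mult_distrib power_mult[symmetric] mult.commute)
    finally show ?thesis by (simp add: sum_list_const_mult)
  qed
  with \<open>D\<^sub>0 \<le> D\<close> show ?thesis by (rule that)
qed

lemma fex_not_sum_squares_mod_J:
  assumes "2 \<le> n" and "0 < \<mu>" and "set gs \<subseteq> UInv n"
    and fex_eq: "\<forall>w. fex w = (\<Sum>g\<leftarrow>gs. cnj (g w) * g w) + (J n w - of_real \<mu>) * h w"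
  shows False
proof -
  define F where "F u = \<mu>^6 * snd (snd u) ^ 6 * motzkin (fst u) (fst (snd u)) (snd (snd u))" for u
  have on_sphere: "(\<Sum>g\<leftarrow>gs. cmod (g (sphere_point \<mu> u)) ^ 2) = F u / weight u ^ 6" for u
  proof -
    obtain a b c where u: "u = (a, b, c)" by (cases u)
    have "of_real (\<Sum>g\<leftarrow>gs. cmod (g (sphere_point \<mu> u)) ^ 2) = fex (sphere_point \<mu> u)"
      using fex_eq \<open>0 < \<mu>\<close> by (simp add: J_sphere_point[OF assms(1)] sum_cnj_mult_self)
    also have "\<dots> = of_real (F u / weight u ^ 6)"
      using \<open>0 < \<mu>\<close> by (simp add: u fex_sphere_point F_def power_divide)
    finally show ?thesis by (simp only: of_real_eq_iff)
  qed
  from less_imp_le[OF \<open>0 < \<mu>\<close>] assms(3) obtain D tss where "3 \<le> D"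
    and tss: "\<And>u. (\<Sum>ts\<leftarrow>tss. eval3 ts u ^ 2)
      = weight u ^ (2*D) * (\<Sum>g\<leftarrow>gs. cmod (g (sphere_point \<mu> u)) ^ 2)"
    by (rule sum_squares_UInv_sphere_point[of \<mu> gs n 3]) blast
  have "(\<Sum>ts\<leftarrow>tss. eval3 ts u ^ 2) = weight u ^ (2*D - 6) * F u" for u
    using \<open>3 \<le> D\<close> weight_pos[of u] by (simp add: tss on_sphere power_diff)
  moreover have "F (s*a, s*b, s*c) = s^(2*6) * F (a, b, c)" for s a b c
    by (simp add: F_def motzkin_scale power_mult_distrib)
  ultimately have "(\<Sum>ts\<leftarrow>tss. eval3 (hom_part 6 ts) u ^ 2) = F u" for u
    by (intro sum_squares_hom_part_eq)
  then show False
    using c_pow6_motzkin_not_sum_squares[of "\<mu>^6" "map (hom_part 6) tss"] \<open>0 < \<mu>\<close>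
    by (simp add: o_def homogeneous3_hom_part F_def)
qed

theorem proposition4p6:
  fixes n :: nat and \<mu> :: real
  assumes "2 \<le> n" and "0 < \<mu>"
  shows "fex \<in> R0mu n \<mu> \<and>
    \<not> (\<exists>gs h. set gs \<subseteq> UInv n \<and> h \<in> UInv n \<and> (\<forall>w. h w \<in> \<real>) \<and>
         (\<forall>w. fex w = (\<Sum>g\<leftarrow>gs. cnj (g w) * g w) + (J n w - complex_of_real \<mu>) * h w))"
proof
  show "fex \<in> R0mu n \<mu>"
    using fex_UInv assms(1) by (simp add: R0mu_def fex_eq_motzkin motzkin_nonneg)
  show "\<not> (\<exists>gs h. set gs \<subseteq> UInv n \<and> h \<in> UInv n \<and> (\<forall>w. h w \<in> \<real>) \<and>
         (\<forall>w. fex w = (\<Sum>g\<leftarrow>gs. cnj (g w) * g w) + (J n w - complex_of_real \<mu>) * h w))"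
    using fex_not_sum_squares_mod_J[OF assms] by blast
qed

end
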